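(* For each $n\ge1$: for all integers $k,l\ge 0$, $\phi_n(k)\phi_n(l)=\phi_n(2kl+k+l)$; and for all integers $k,l\ge1$, $\phi^*_n(k)\phi^*_n(l)=\phi^*_n(2kl)$ and $\phi^+_n(k)\phi^+_n(l)=\phi^+_n(kl)$, where products are taken in the group algebra $\mathbb{Q}[S_n]$.
   Context: For $\pi\in S_n$, $\Omega_\pi(m),\Omega^*_\pi(m),\Omega^+_\pi(m)$ are defined as follows. Integers are written with $\bar i=-i$, ordered $0<_{\mathbb Z}\bar1<_{\mathbb Z}1<_{\mathbb Z}\bar2<_{\mathbb Z}2<\cdots$, $|\bar j|=j$; $a\prec_+b$ means $a<_{\mathbb Z}b$ or $a=b\in\{0,1,\ldots\}$; $a\prec_-b$ means $a<_{\mathbb Z}b$ or $a=b\in\{\bar1,\bar2,\ldots\}$. A $\pi$-partition is $f:[n]\to\mathbb Z$ with, for $1\le i<n$, $f(\pi(i))\prec_+f(\pi(i+1))$ if $\pi(i)<\pi(i+1)$ and $f(\pi(i))\prec_-f(\pi(i+1))$ if $\pi(i)>\pi(i+1)$. $\Omega_\pi(m)$ counts $\pi$-partitions with all $|f(i)|\le m$; $\Omega^*_\pi(m)$ those also never $0$; $\Omega^+_\pi(m)$ those with values in $\{1,\ldots,m\}$. Set $x_m(\pi)=\Omega_\pi(m)/(2m+1)^n$ (for $m\ge0$), $x^*_m(\pi)=\Omega^*_\pi(m)/(2m)^n$, $x^+_m(\pi)=\Omega^+_\pi(m)/m^n$ (for $m\ge1$); these are the probabilities of obtaining $\pi$ from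 an $m$-shelf shuffler in lazy, standard and strict mode respectively. Define $\phi_n(m)=\sum_{\pi\in S_n}x_m(\pi)\pi$, $\phi^*_n(m)=\sum_{\pi}x^*_m(\pi)\pi$, $\phi^+_n(m)=\sum_\pi x^+_m(\pi)\pi$, with multiplication in $\mathbb Q[S_n]$ induced by composition of permutations. *)

theory Defs
  imports Complex_Main "HOL-Combinatorics.Permutations" "HOL-Library.FuncSet"
begin

text \<open>Rank of an integer in the order 0 < -1 < 1 < -2 < 2 < ...\<close>
definition zrank :: "int \<Rightarrow> int" where
  "zrank a = (if a \<ge> 0 then 2 * a else 2 * (- a) - 1)"

definition zless :: "int \<Rightarrow> int \<Rightarrow> bool" where
  "zless a b \<longleftrightarrow> zrank a < zrank b"

definition prec_plus :: "int \<Rightarrow> int \<Rightarrow> bool" where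
  "prec_plus a b \<longleftrightarrow> zless a b \<or> (a = b \<and> a \<ge> 0)"

definition prec_minus :: "int \<Rightarrow> int \<Rightarrow> bool" where
  "prec_minus a b \<longleftrightarrow> zless a b \<or> (a = b \<and> a < 0)"

definition is_pi_partition :: "nat \<Rightarrow> (nat \<Rightarrow> nat) \<Rightarrow> (nat \<Rightarrow> int) \<Rightarrow> bool" where
  "is_pi_partition n \<pi> f \<longleftrightarrow>
     (\<forall>i. 1 \<le> i \<and> i < n \<longrightarrow>
        (\<pi> i < \<pi> (i+1) \<longrightarrow> prec_plus (f (\<pi> i)) (f (\<pi> (i+1)))) \<and>
        (\<pi> i > \<pi> (i+1) \<longrightarrow> prec_minus (f (\<pi> i)) (f (\<pi> (i+1)))))"

definition Omega :: "nat \<Rightarrow> (nat \<Rightarrow> nat) \<Rightarrow> nat \<Rightarrow> nat" where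
  "Omega n \<pi> m = card {f \<in> {1..n} \<rightarrow>\<^sub>E {- int m..int m}. is_pi_partition n \<pi> f}"

definition Omega_star :: "nat \<Rightarrow> (nat \<Rightarrow> nat) \<Rightarrow> nat \<Rightarrow> nat" where
  "Omega_star n \<pi> m = card {f \<in> {1..n} \<rightarrow>\<^sub>E ({- int m..int m} - {0}). is_pi_partition n \<pi> f}"

definition Omega_plus :: "nat \<Rightarrow> (nat \<Rightarrow> nat) \<Rightarrow> nat \<Rightarrow> nat" where
  "Omega_plus n \<pi> m = card {f \<in> {1..n} \<rightarrow>\<^sub>E {1..int m}. is_pi_partition n \<pi> f}"

text \<open>Elements of Q[S_n] as functions on permutations of {1..n} (zero elsewhere).\<close>
definition phi :: "nat \<Rightarrow> nat \<Rightarrow> (nat \<Rightarrow> nat) \<Rightarrow> rat" where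
  "phi n m \<pi> = (if \<pi> permutes {1..n} then of_nat (Omega n \<pi> m) / of_nat ((2*m+1)^n) else 0)"

definition phi_star :: "nat \<Rightarrow> nat \<Rightarrow> (nat \<Rightarrow> nat) \<Rightarrow> rat" where
  "phi_star n m \<pi> = (if \<pi> permutes {1..n} then of_nat (Omega_star n \<pi> m) / of_nat ((2*m)^n) else 0)"

definition phi_plus :: "nat \<Rightarrow> nat \<Rightarrow> (nat \<Rightarrow> nat) \<Rightarrow> rat" where
  "phi_plus n m \<pi> = (if \<pi> permutes {1..n} then of_nat (Omega_plus n \<pi> m) / of_nat (m^n) else 0)"

definition gmult :: "nat \<Rightarrow> ((nat \<Rightarrow> nat) \<Rightarrow> rat) \<Rightarrow> ((nat \<Rightarrow> nat) \<Rightarrow> rat) \<Rightarrow> (nat \<Rightarrow> nat) \<Rightarrow> rat" where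
  "gmult n a b \<sigma> = (\<Sum>\<pi>\<in>{p. p permutes {1..n}}. \<Sum>\<tau>\<in>{p. p permutes {1..n}}.
      (if \<pi> \<circ> \<tau> = \<sigma> then a \<pi> * b \<tau> else 0))"

end

theory Submission
  imports Defs "HOL-Library.Product_Lexorder"
begin

(* A function f : [n] -> Z determines a total order on [n]: compare the values in the order
   0 < -1 < 1 < -2 < ..., and break ties by increasing index for nonnegative and by decreasing
   index for negative values. By the definition of prec_plus and prec_minus, f is a
   \<pi>-partition exactly when \<pi> lists [n] increasingly in this order, so every f is a
   \<pi>-partition for exactly one \<pi>.

   Let comb : B \<times> A -> C be a bijection of value sets that multiplies signs and is monotone
   for the lexicographic order on B \<times> A in which the second coordinate is compared backwards
   when the first one is negative. Then (\<pi>, f, g) |-> h, h j = comb (g (\<pi>^-1 j)) (f j), is a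
   bijection from the triples with f a \<pi>-partition into A and g a (\<pi>^-1 \<sigma>)-partition into B
   onto the \<sigma>-partitions into C. Counting both sides gives
   Omega_C(\<sigma>) = \<Sum>_\<pi> Omega_A(\<pi>) Omega_B(\<pi>^-1 \<sigma>), and as |C| = |A| |B| this is the product
   formula in Q[S_n]. Mixed-radix arithmetic on the ranks 0, 1, 2, ... of the order above yields
   such a comb in the lazy and the standard mode, and ordinary mixed radix in the strict mode. *)

lemma zrank_eq_iff [simp]: "zrank a = zrank b \<longleftrightarrow> a = b"
  by (auto simp: zrank_def split: if_splits) presburger+

lemma even_zrank_iff: "even (zrank a) \<longleftrightarrow> 0 \<le> a"
  by (auto simp: zrank_def)

lemma zless_irrefl: "\<not> zless a a"
  by (simp add: zless_def)

lemma zless_asym: "zless a b \<Longrightarrow> \<not> zless b a"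
  by (simp add: zless_def)

lemma zless_linear: "zless a b \<or> a = b \<or> zless b a"
  unfolding zless_def using zrank_eq_iff by (metis linorder_neqE)

lemma zless_nonneg_iff: "0 \<le> a \<Longrightarrow> 0 \<le> b \<Longrightarrow> zless a b \<longleftrightarrow> a < b"
  by (simp add: zless_def zrank_def)

definition zunrank :: "int \<Rightarrow> int" where
  "zunrank t = (if even t then t div 2 else - ((t + 1) div 2))"

lemma zrank_zunrank: "0 \<le> t \<Longrightarrow> zrank (zunrank t) = t"
  by (auto simp: zrank_def zunrank_def) presburger+

section \<open>Partitions as sorting keys\<close>

text \<open>Breaking ties by the signed index turns both prec_plus and prec_minus into one strict
  order on [n].\<close>
definition partition_key :: "(nat \<Rightarrow> int) \<Rightarrow> nat \<Rightarrow> int \<times> int" where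
  "partition_key f x = (zrank (f x), if 0 \<le> f x then int x else - int x)"

lemma inj_partition_key: "inj (partition_key f)"
  by (rule injI) (auto simp: partition_key_def split: if_splits)

lemma partition_key_less_iff:
  assumes "x \<noteq> y"
  shows "partition_key f x < partition_key f y \<longleftrightarrow>
    zless (f x) (f y) \<or> (f x = f y \<and> (0 \<le> f x \<longleftrightarrow> x < y))"
proof (cases "f x = f y")
  case True
  with assms show ?thesis
    by (auto simp: partition_key_def zless_def)
next
  case False
  then have "zrank (f x) \<noteq> zrank (f y)"
    by simp
  then have "partition_key f x < partition_key f y \<longleftrightarrow> zless (f x) (f y)"
    unfolding partition_key_def less_prod_def zless_def by (auto simp del: zrank_eq_iff)
  with False show ?thesis
    by simp
qed

lemma prec_plus_iff_partition_key_less: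
  "x < y \<Longrightarrow> prec_plus (f x) (f y) \<longleftrightarrow> partition_key f x < partition_key f y"
  by (auto simp: partition_key_less_iff prec_plus_def)

lemma prec_minus_iff_partition_key_less:
  "y < x \<Longrightarrow> prec_minus (f x) (f y) \<longleftrightarrow> partition_key f x < partition_key f y"
  by (auto simp: partition_key_less_iff prec_minus_def)

definition sorts :: "nat \<Rightarrow> (nat \<Rightarrow> 'b::linorder) \<Rightarrow> (nat \<Rightarrow> nat) \<Rightarrow> bool" where
  "sorts n K \<pi> \<longleftrightarrow> (\<forall>i j. 1 \<le> i \<longrightarrow> i < j \<longrightarrow> j \<le> n \<longrightarrow> K (\<pi> i) < K (\<pi> j))"

lemma sorts_iff_adjacent:
  "sorts n K \<pi> \<longleftrightarrow> (\<forall>i. 1 \<le> i \<and> i < n \<longrightarrow> K (\<pi> i) < K (\<pi> (i + 1)))"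
proof
  assume adj: "\<forall>i. 1 \<le> i \<and> i < n \<longrightarrow> K (\<pi> i) < K (\<pi> (i + 1))"
  have "1 \<le> i \<Longrightarrow> i < j \<Longrightarrow> j \<le> n \<Longrightarrow> K (\<pi> i) < K (\<pi> j)" for i j
  proof (induction j)
    case (Suc j)
    with adj show ?case
      by (cases "i = j") (auto intro: order.strict_trans)
  qed simp
  then show "sorts n K \<pi>"
    by (simp add: sorts_def)
qed (simp add: sorts_def)

lemma is_pi_partition_iff_sorts:
  assumes "\<pi> permutes {1..n}"
  shows "is_pi_partition n \<pi> f \<longleftrightarrow> sorts n (partition_key f) \<pi>"
proof -
  have "\<pi> i \<noteq> \<pi> (i + 1)" for i
    using permutes_inj[OF assms] by (metis inj_eq n_not_Suc_n Suc_eq_plus1)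
  then show ?thesis
    unfolding is_pi_partition_def sorts_iff_adjacent
    using prec_plus_iff_partition_key_less prec_minus_iff_partition_key_less
    by (metis linorder_neqE_nat)
qed

lemma sorts_less_iff:
  assumes "sorts n K \<pi>" "i \<in> {1..n}" "j \<in> {1..n}"
  shows "K (\<pi> i) < K (\<pi> j) \<longleftrightarrow> i < j"
  using assms unfolding sorts_def by (metis atLeastAtMost_iff less_asym linorder_neqE_nat)

definition key_rank :: "nat \<Rightarrow> (nat \<Rightarrow> 'b::linorder) \<Rightarrow> nat \<Rightarrow> nat" where
  "key_rank n K x = card {y \<in> {1..n}. K y \<le> K x}"

lemma key_rank_less_iff:
  assumes "inj_on K {1..n}" "x \<in> {1..n}" "y \<in> {1..n}"
  shows "key_rank n K x < key_rank n K y \<longleftrightarrow> K x < K y"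
proof -
  have psubset: "key_rank n K u < key_rank n K v" if "K u < K v" "v \<in> {1..n}" for u v
  proof -
    have "v \<in> {y \<in> {1..n}. K y \<le> K v}" "v \<notin> {y \<in> {1..n}. K y \<le> K u}"
      and "{y \<in> {1..n}. K y \<le> K u} \<subseteq> {y \<in> {1..n}. K y \<le> K v}"
      using that by auto
    then have "{y \<in> {1..n}. K y \<le> K u} \<subset> {y \<in> {1..n}. K y \<le> K v}"
      by blast
    then show ?thesis
      unfolding key_rank_def by (intro psubset_card_mono) auto
  qed
  have "K x \<noteq> K y" if "x \<noteq> y"
    using assms that by (meson inj_on_eq_iff)
  then show ?thesis
    using psubset assms by (metis less_asym linorder_neqE)
qed

lemma key_rank_in_range:
  assumes "x \<in> {1..n}"
  shows "key_rank n K x \<in> {1..n}"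
proof -
  have "x \<in> {y \<in> {1..n}. K y \<le> K x}"
    using assms by simp
  then have "0 < key_rank n K x"
    unfolding key_rank_def by (subst card_gt_0_iff) auto
  moreover have "key_rank n K x \<le> card {1..n}"
    unfolding key_rank_def by (rule card_mono) auto
  ultimately show ?thesis
    by simp
qed

lemma key_rank_sorting:
  assumes p: "\<pi> permutes {1..n}" and s: "sorts n K \<pi>" and i: "i \<in> {1..n}"
  shows "key_rank n K (\<pi> i) = i"
proof -
  have "{y \<in> {1..n}. K y \<le> K (\<pi> i)} = {y \<in> \<pi> ` {1..n}. K y \<le> K (\<pi> i)}"
    using permutes_image[OF p] by simp
  also have "\<dots> = \<pi> ` {y \<in> {1..n}. K (\<pi> y) \<le> K (\<pi> i)}"
    by auto
  also have "{y \<in> {1..n}. K (\<pi> y) \<le> K (\<pi> i)} = {1..i}"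
  proof -
    have "K (\<pi> y) \<le> K (\<pi> i) \<longleftrightarrow> y \<le> i" if "y \<in> {1..n}" for y
      using sorts_less_iff[OF s i that] by (simp add: not_less[symmetric])
    then show ?thesis
      using i by auto
  qed
  finally have "key_rank n K (\<pi> i) = card (\<pi> ` {1..i})"
    by (simp only: key_rank_def)
  also have "\<dots> = i"
    using permutes_inj[OF p] by (simp add: card_image inj_on_subset)
  finally show ?thesis .
qed

lemma inj_on_key_rank:
  assumes "inj_on K {1..n}"
  shows "inj_on (key_rank n K) {1..n}"
proof (rule inj_onI)
  fix x y
  assume x: "x \<in> {1..n}" and y: "y \<in> {1..n}" and eq: "key_rank n K x = key_rank n K y"
  then have "K x = K y"
    using key_rank_less_iff[OF assms x y] key_rank_less_iff[OF assms y x] by (simp add: antisym_conv3)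
  then show "x = y"
    using inj_onD[OF assms _ x y] by simp
qed

lemma ex_sorting_perm:
  assumes inj: "inj_on K {1..n}"
  obtains \<pi> where "\<pi> permutes {1..n}" and "sorts n K \<pi>"
proof -
  let ?r = "key_rank n K"
  have "?r ` {1..n} = {1..n}"
    by (intro endo_inj_surj finite_atLeastAtMost image_subsetI key_rank_in_range inj_on_key_rank[OF inj])
  then have mset_eq: "image_mset id (mset_set {1..n}) = image_mset ?r (mset_set {1..n})"
    using inj_on_key_rank[OF inj] by (simp add: image_mset_mset_set)
  obtain \<pi> where p: "\<pi> permutes {1..n}" and r: "\<forall>i\<in>{1..n}. i = ?r (\<pi> i)"
    using image_mset_eq_implies_permutes[OF finite_atLeastAtMost mset_eq] by (metis id_apply)
  have "sorts n K \<pi>"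
    unfolding sorts_def
  proof (intro allI impI)
    fix i j :: nat
    assume "1 \<le> i" "i < j" "j \<le> n"
    then have "i \<in> {1..n}" "j \<in> {1..n}" "?r (\<pi> i) < ?r (\<pi> j)"
      using r by auto
    then show "K (\<pi> i) < K (\<pi> j)"
      using key_rank_less_iff[OF inj] permutes_in_image[OF p] by blast
  qed
  with p that show thesis
    by blast
qed

lemma sorts_unique:
  assumes inj: "inj_on K {1..n}"
    and p1: "\<pi>1 permutes {1..n}" and s1: "sorts n K \<pi>1"
    and p2: "\<pi>2 permutes {1..n}" and s2: "sorts n K \<pi>2"
  shows "\<pi>1 = \<pi>2"
proof
  fix i
  show "\<pi>1 i = \<pi>2 i"
  proof (cases "i \<in> {1..n}")
    case True
    then have "key_rank n K (\<pi>1 i) = key_rank n K (\<pi>2 i)"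
      using key_rank_sorting[OF p1 s1] key_rank_sorting[OF p2 s2] by simp
    moreover have "\<pi>1 i \<in> {1..n}" "\<pi>2 i \<in> {1..n}"
      using True permutes_in_image[OF p1] permutes_in_image[OF p2] by blast+
    ultimately show ?thesis
      using inj_onD[OF inj_on_key_rank[OF inj]] by blast
  next
    case False
    then show ?thesis
      using p1 p2 by (simp add: permutes_not_in)
  qed
qed

definition sorting_perm :: "nat \<Rightarrow> (nat \<Rightarrow> 'b::linorder) \<Rightarrow> nat \<Rightarrow> nat" where
  "sorting_perm n K = (SOME \<pi>. \<pi> permutes {1..n} \<and> sorts n K \<pi>)"

lemma sorting_perm:
  assumes "inj_on K {1..n}"
  shows "sorting_perm n K permutes {1..n}" and "sorts n K (sorting_perm n K)"
proof -
  obtain \<pi> where "\<pi> permutes {1..n} \<and> sorts n K \<pi>"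
    using ex_sorting_perm[OF assms] by blast
  from someI[of "\<lambda>\<pi>. \<pi> permutes {1..n} \<and> sorts n K \<pi>", OF this]
  show "sorting_perm n K permutes {1..n}" and "sorts n K (sorting_perm n K)"
    by (simp_all add: sorting_perm_def)
qed

lemma sorting_perm_eqI:
  assumes "inj_on K {1..n}" "\<pi> permutes {1..n}" "sorts n K \<pi>"
  shows "sorting_perm n K = \<pi>"
  using sorts_unique[OF assms(1) sorting_perm[OF assms(1)] assms(2,3)] .

section \<open>Twisted lexicographic encodings\<close>

definition twisted_lex_encoding :: "int set \<Rightarrow> int set \<Rightarrow> int set \<Rightarrow> (int \<Rightarrow> int \<Rightarrow> int) \<Rightarrow> bool" where
  "twisted_lex_encoding A B C comb \<longleftrightarrow>
     finite A \<and> finite B \<and> bij_betw (\<lambda>(c, a). comb c a) (B \<times> A) C \<and>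
     (\<forall>c\<in>B. \<forall>a\<in>A. 0 \<le> comb c a \<longleftrightarrow> (0 \<le> c \<longleftrightarrow> 0 \<le> a)) \<and>
     (\<forall>c\<in>B. \<forall>c'\<in>B. \<forall>a\<in>A. \<forall>a'\<in>A. zless (comb c a) (comb c' a') \<longleftrightarrow>
        zless c c' \<or> (c = c' \<and> (if 0 \<le> c then zless a a' else zless a' a)))"

lemma twisted_lex_encodingI:
  assumes fin: "finite A" "finite B" "finite C" and card: "card C = card A * card B"
    and into: "\<And>c a. c \<in> B \<Longrightarrow> a \<in> A \<Longrightarrow> comb c a \<in> C"
    and sign: "\<And>c a. c \<in> B \<Longrightarrow> a \<in> A \<Longrightarrow> 0 \<le> comb c a \<longleftrightarrow> (0 \<le> c \<longleftrightarrow> 0 \<le> a)"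
    and order: "\<And>c c' a a'. c \<in> B \<Longrightarrow> c' \<in> B \<Longrightarrow> a \<in> A \<Longrightarrow> a' \<in> A \<Longrightarrow>
      zless (comb c a) (comb c' a') \<longleftrightarrow> zless c c' \<or> (c = c' \<and> (if 0 \<le> c then zless a a' else zless a' a))"
  shows "twisted_lex_encoding A B C comb"
proof -
  let ?comb = "\<lambda>(c, a). comb c a"
  have "inj_on ?comb (B \<times> A)"
  proof (rule inj_onI, clarify)
    fix c a c' a'
    assume mem: "c \<in> B" "a \<in> A" "c' \<in> B" "a' \<in> A" and eq: "comb c a = comb c' a'"
    then have "c = c'"
      using order[of c c' a a'] order[of c' c a' a] zless_irrefl zless_linear by metis
    with mem eq show "c = c' \<and> a = a'"
      using order[of c c a a'] order[of c c a' a] zless_irrefl zless_linear by metis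
  qed
  moreover have "?comb ` (B \<times> A) = C"
    using calculation into card fin
    by (intro card_subset_eq) (auto simp: card_image card_cartesian_product)
  ultimately show ?thesis
    unfolding twisted_lex_encoding_def bij_betw_def using fin sign order by blast
qed

lemma twisted_lex_encoding_eq_iff:
  assumes "twisted_lex_encoding A B C comb" "c \<in> B" "c' \<in> B" "a \<in> A" "a' \<in> A"
  shows "comb c a = comb c' a' \<longleftrightarrow> c = c' \<and> a = a'"
proof -
  have inj: "inj_on (\<lambda>(c, a). comb c a) (B \<times> A)"
    using assms(1) by (simp add: twisted_lex_encoding_def bij_betw_def)
  have "(c, a) = (c', a')" if "comb c a = comb c' a'"
    using inj_onD[OF inj, of "(c, a)" "(c', a')"] that assms(2-) by simp
  then show ?thesis
    by auto
qed

lemma twisted_lex_encoding_in: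
  assumes "twisted_lex_encoding A B C comb" "c \<in> B" "a \<in> A"
  shows "comb c a \<in> C"
  using assms bij_betw_apply[of "\<lambda>(c, a). comb c a" "B \<times> A" C "(c, a)"]
  by (simp add: twisted_lex_encoding_def)

lemma partition_key_merge_less:
  assumes enc: "twisted_lex_encoding A B C comb"
    and mem: "g q \<in> B" "g q' \<in> B" "f j \<in> A" "f j' \<in> A" and "j \<noteq> j'" "q \<noteq> q'"
    and h: "h j = comb (g q) (f j)" "h j' = comb (g q') (f j')"
    and f: "partition_key f j < partition_key f j' \<longleftrightarrow> q < q'"
  shows "partition_key h j < partition_key h j' \<longleftrightarrow> partition_key g q < partition_key g q'"
proof -
  have order: "zless (h j) (h j') \<longleftrightarrow>
      zless (g q) (g q') \<or> (g q = g q' \<and> (if 0 \<le> g q then zless (f j) (f j') else zless (f j') (f j)))"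
    using enc mem unfolding h twisted_lex_encoding_def by blast
  have sign: "0 \<le> h j \<longleftrightarrow> (0 \<le> g q \<longleftrightarrow> 0 \<le> f j)"
    using enc mem unfolding h twisted_lex_encoding_def by blast
  have eq: "h j = h j' \<longleftrightarrow> g q = g q' \<and> f j = f j'"
    unfolding h using twisted_lex_encoding_eq_iff[OF enc mem] .
  have "q < q' \<longleftrightarrow> \<not> q' < q" "j < j' \<longleftrightarrow> \<not> j' < j"
    using \<open>j \<noteq> j'\<close> \<open>q \<noteq> q'\<close> by auto
  \<comment> \<open>If g q = g q' and f j = f j', the tie-break of h by j agrees with that of g by q:
    the sign rule composes the reversal by the sign of f j with the one by the sign of g q.\<close>
  with f order sign eq show ?thesis
    using \<open>j \<noteq> j'\<close> \<open>q \<noteq> q'\<close>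
    unfolding partition_key_less_iff[OF \<open>j \<noteq> j'\<close>] partition_key_less_iff[OF \<open>q \<noteq> q'\<close>]
    using zless_irrefl zless_asym zless_linear by metis
qed

lemma sorts_merge_iff:
  assumes enc: "twisted_lex_encoding A B C comb"
    and p: "\<pi> permutes {1..n}" and \<sigma>: "\<sigma> permutes {1..n}" and sf: "sorts n (partition_key f) \<pi>"
    and f: "f \<in> {1..n} \<rightarrow> A" and g: "g \<in> {1..n} \<rightarrow> B"
    and h: "\<And>j. j \<in> {1..n} \<Longrightarrow> h j = comb (g (inv \<pi> j)) (f j)"
  shows "sorts n (partition_key h) \<sigma> \<longleftrightarrow> sorts n (partition_key g) (inv \<pi> \<circ> \<sigma>)"
proof -
  have "partition_key h (\<sigma> i) < partition_key h (\<sigma> i') \<longleftrightarrow>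
      partition_key g (inv \<pi> (\<sigma> i)) < partition_key g (inv \<pi> (\<sigma> i'))"
    if "1 \<le> i" "i < i'" "i' \<le> n" for i i'
  proof -
    define j j' where "j = \<sigma> i" and "j' = \<sigma> i'"
    define q q' where "q = inv \<pi> j" and "q' = inv \<pi> j'"
    have j: "j \<in> {1..n}" "j' \<in> {1..n}" "j \<noteq> j'"
      unfolding j_def j'_def using that permutes_in_image[OF \<sigma>] permutes_inj[OF \<sigma>]
      by (auto dest: injD)
    have q: "q \<in> {1..n}" "q' \<in> {1..n}" "q \<noteq> q'"
      unfolding q_def q'_def using j permutes_in_image[OF permutes_inv[OF p]]
        permutes_inj[OF permutes_inv[OF p]] by (auto dest: injD)
    have mem: "g q \<in> B" "g q' \<in> B" "f j \<in> A" "f j' \<in> A"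
      using f g j q by auto
    have hj: "h j = comb (g q) (f j)" "h j' = comb (g q') (f j')"
      using h j by (simp_all add: q_def q'_def)
    have "partition_key f j < partition_key f j' \<longleftrightarrow> q < q'"
      using sorts_less_iff[OF sf q(1,2)] by (simp add: q_def q'_def permutes_inverses(1)[OF p])
    from partition_key_merge_less[OF enc mem j(3) q(3) hj this] show ?thesis
      by (simp add: j_def j'_def q_def q'_def)
  qed
  then show ?thesis
    unfolding sorts_def by auto
qed

section \<open>Counting \<pi>-partitions of a product\<close>

definition pi_partitions :: "nat \<Rightarrow> (nat \<Rightarrow> nat) \<Rightarrow> int set \<Rightarrow> (nat \<Rightarrow> int) set" where
  "pi_partitions n \<pi> X = {f \<in> {1..n} \<rightarrow>\<^sub>E X. is_pi_partition n \<pi> f}"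

lemma finite_pi_partitions:
  assumes "finite X"
  shows "finite (pi_partitions n \<pi> X)"
proof -
  have "finite ({1..n} \<rightarrow>\<^sub>E X)"
    using assms by (simp add: finite_PiE)
  then show ?thesis
    by (rule rev_finite_subset) (auto simp: pi_partitions_def)
qed

lemma twisted_lex_encoding_decode:
  assumes enc: "twisted_lex_encoding A B C comb"
  defines "d \<equiv> the_inv_into (B \<times> A) (\<lambda>(c, a). comb c a)"
  shows "\<And>x. x \<in> C \<Longrightarrow> d x \<in> B \<times> A \<and> comb (fst (d x)) (snd (d x)) = x"
    and "\<And>c a. c \<in> B \<Longrightarrow> a \<in> A \<Longrightarrow> d (comb c a) = (c, a)"
proof -
  have bij: "bij_betw (\<lambda>(c, a). comb c a) (B \<times> A) C"
    using enc by (simp add: twisted_lex_encoding_def)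
  show "d x \<in> B \<times> A \<and> comb (fst (d x)) (snd (d x)) = x" if "x \<in> C" for x
    using that bij f_the_inv_into_f_bij_betw[OF bij] bij_betw_the_inv_into[OF bij]
    by (auto simp: d_def case_prod_beta bij_betw_apply)
  show "d (comb c a) = (c, a)" if "c \<in> B" "a \<in> A" for c a
    using that the_inv_into_f_f[OF bij_betw_imp_inj_on[OF bij], of "(c, a)"] by (simp add: d_def)
qed

definition merge_partitions ::
    "nat \<Rightarrow> (int \<Rightarrow> int \<Rightarrow> int) \<Rightarrow> (nat \<Rightarrow> nat) \<times> (nat \<Rightarrow> int) \<times> (nat \<Rightarrow> int) \<Rightarrow> nat \<Rightarrow> int" where
  "merge_partitions n comb = (\<lambda>(\<pi>, f, g). \<lambda>j\<in>{1..n}. comb (g (inv \<pi> j)) (f j))"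

definition split_partition :: "nat \<Rightarrow> int set \<Rightarrow> int set \<Rightarrow> (int \<Rightarrow> int \<Rightarrow> int) \<Rightarrow> (nat \<Rightarrow> int) \<Rightarrow>
    (nat \<Rightarrow> nat) \<times> (nat \<Rightarrow> int) \<times> (nat \<Rightarrow> int)" where
  "split_partition n A B comb h =
     (let d = the_inv_into (B \<times> A) (\<lambda>(c, a). comb c a);
          f = (\<lambda>j\<in>{1..n}. snd (d (h j)));
          \<pi> = sorting_perm n (partition_key f)
      in (\<pi>, f, \<lambda>q\<in>{1..n}. fst (d (h (\<pi> q)))))"

lemma merge_partitions_in:
  assumes enc: "twisted_lex_encoding A B C comb" and \<sigma>: "\<sigma> permutes {1..n}"
    and p: "\<pi> permutes {1..n}"
    and f: "f \<in> pi_partitions n \<pi> A" and g: "g \<in> pi_partitions n (inv \<pi> \<circ> \<sigma>) B"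
  shows "merge_partitions n comb (\<pi>, f, g) \<in> pi_partitions n \<sigma> C"
proof -
  define h where "h = merge_partitions n comb (\<pi>, f, g)"
  have fA: "f \<in> {1..n} \<rightarrow> A" and gB: "g \<in> {1..n} \<rightarrow> B"
    using f g by (auto simp: pi_partitions_def)
  have hj: "h j = comb (g (inv \<pi> j)) (f j)" if "j \<in> {1..n}" for j
    using that by (simp add: h_def merge_partitions_def)
  have "h \<in> {1..n} \<rightarrow>\<^sub>E C"
    using twisted_lex_encoding_in[OF enc] fA gB permutes_in_image[OF permutes_inv[OF p]]
    by (auto simp: h_def merge_partitions_def Pi_iff)
  moreover have "sorts n (partition_key h) \<sigma>"
  proof (subst sorts_merge_iff[OF enc p \<sigma> _ fA gB hj])
    show "sorts n (partition_key f) \<pi>"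
      using f is_pi_partition_iff_sorts[OF p] by (simp add: pi_partitions_def)
    show "sorts n (partition_key g) (inv \<pi> \<circ> \<sigma>)"
      using g is_pi_partition_iff_sorts[OF permutes_compose[OF \<sigma> permutes_inv[OF p]]]
      by (simp add: pi_partitions_def)
  qed
  ultimately show ?thesis
    using is_pi_partition_iff_sorts[OF \<sigma>] by (simp add: h_def pi_partitions_def)
qed

lemma split_merge_partitions:
  assumes enc: "twisted_lex_encoding A B C comb"
    and p: "\<pi> permutes {1..n}"
    and f: "f \<in> pi_partitions n \<pi> A" and g: "g \<in> {1..n} \<rightarrow>\<^sub>E B"
  shows "split_partition n A B comb (merge_partitions n comb (\<pi>, f, g)) = (\<pi>, f, g)"
proof -
  define d where "d = the_inv_into (B \<times> A) (\<lambda>(c, a). comb c a)"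
  define h where "h = merge_partitions n comb (\<pi>, f, g)"
  have fA: "f \<in> {1..n} \<rightarrow>\<^sub>E A"
    using f by (simp add: pi_partitions_def)
  have dh: "d (h j) = (g (inv \<pi> j), f j)" if "j \<in> {1..n}" for j
  proof -
    have "g (inv \<pi> j) \<in> B" "f j \<in> A"
      using that fA g permutes_in_image[OF permutes_inv[OF p]] by (auto simp: PiE_iff)
    with that show ?thesis
      unfolding d_def by (simp add: h_def merge_partitions_def twisted_lex_encoding_decode(2)[OF enc])
  qed
  have "(\<lambda>j\<in>{1..n}. snd (d (h j))) = restrict f {1..n}"
    using dh by (intro restrict_ext) simp
  then have f': "(\<lambda>j\<in>{1..n}. snd (d (h j))) = f"
    using PiE_restrict[OF fA] by simp
  have "sorting_perm n (partition_key f) = \<pi>"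
    using f is_pi_partition_iff_sorts[OF p] inj_on_subset[OF inj_partition_key]
    by (intro sorting_perm_eqI p) (auto simp: pi_partitions_def)
  moreover have "(\<lambda>q\<in>{1..n}. fst (d (h (\<pi> q)))) = restrict g {1..n}"
    using dh permutes_in_image[OF p] permutes_inverses(2)[OF p] by (intro restrict_ext) simp
  then have "(\<lambda>q\<in>{1..n}. fst (d (h (\<pi> q)))) = g"
    using PiE_restrict[OF g] by simp
  ultimately show ?thesis
    using f' by (simp add: split_partition_def Let_def d_def h_def)
qed

lemma split_partitionE:
  assumes enc: "twisted_lex_encoding A B C comb" and \<sigma>: "\<sigma> permutes {1..n}"
    and h: "h \<in> pi_partitions n \<sigma> C"
  obtains \<pi> f g where "split_partition n A B comb h = (\<pi>, f, g)" "\<pi> permutes {1..n}"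
    "f \<in> pi_partitions n \<pi> A" "g \<in> pi_partitions n (inv \<pi> \<circ> \<sigma>) B"
    "merge_partitions n comb (\<pi>, f, g) = h"
proof -
  define d where "d = the_inv_into (B \<times> A) (\<lambda>(c, a). comb c a)"
  define f where "f = (\<lambda>j\<in>{1..n}. snd (d (h j)))"
  define \<pi> where "\<pi> = sorting_perm n (partition_key f)"
  define g where "g = (\<lambda>q\<in>{1..n}. fst (d (h (\<pi> q))))"
  have hC: "h \<in> {1..n} \<rightarrow>\<^sub>E C" and hs: "sorts n (partition_key h) \<sigma>"
    using h is_pi_partition_iff_sorts[OF \<sigma>] by (auto simp: pi_partitions_def)
  have dh: "d (h j) \<in> B \<times> A" "comb (fst (d (h j))) (snd (d (h j))) = h j" if "j \<in> {1..n}" for j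
    using twisted_lex_encoding_decode(1)[OF enc] hC that by (auto simp: d_def PiE_iff)
  have p: "\<pi> permutes {1..n}" and fs: "sorts n (partition_key f) \<pi>"
    using sorting_perm[OF inj_on_subset[OF inj_partition_key]] by (auto simp: \<pi>_def)
  have fA: "f \<in> {1..n} \<rightarrow>\<^sub>E A" and gB: "g \<in> {1..n} \<rightarrow>\<^sub>E B"
    using dh permutes_in_image[OF p] by (auto simp: f_def g_def mem_Times_iff)
  have hj: "h j = comb (g (inv \<pi> j)) (f j)" if "j \<in> {1..n}" for j
    using that dh permutes_in_image[OF permutes_inv[OF p]] permutes_inverses(1)[OF p]
    by (simp add: f_def g_def)
  have "sorts n (partition_key g) (inv \<pi> \<circ> \<sigma>)"
    using sorts_merge_iff[OF enc p \<sigma> fs _ _ hj] fA gB hs by (auto simp: PiE_iff)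
  then have "g \<in> pi_partitions n (inv \<pi> \<circ> \<sigma>) B"
    using gB is_pi_partition_iff_sorts[OF permutes_compose[OF \<sigma> permutes_inv[OF p]]]
    by (simp add: pi_partitions_def)
  moreover have "f \<in> pi_partitions n \<pi> A"
    using fA fs is_pi_partition_iff_sorts[OF p] by (simp add: pi_partitions_def)
  moreover have "merge_partitions n comb (\<pi>, f, g) = restrict h {1..n}"
    using hj by (simp add: merge_partitions_def cong: restrict_cong)
  then have "merge_partitions n comb (\<pi>, f, g) = h"
    using PiE_restrict[OF hC] by simp
  moreover have "split_partition n A B comb h = (\<pi>, f, g)"
    by (simp add: split_partition_def Let_def d_def f_def \<pi>_def g_def)
  ultimately show ?thesis
    using that p by blast
qed

lemma card_pi_partitions_merge:
  assumes enc: "twisted_lex_encoding A B C comb" and \<sigma>: "\<sigma> permutes {1..n}"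
  shows "card (pi_partitions n \<sigma> C) =
    (\<Sum>\<pi> | \<pi> permutes {1..n}. card (pi_partitions n \<pi> A) * card (pi_partitions n (inv \<pi> \<circ> \<sigma>) B))"
proof -
  let ?T = "SIGMA \<pi>:{\<pi>. \<pi> permutes {1..n}}. pi_partitions n \<pi> A \<times> pi_partitions n (inv \<pi> \<circ> \<sigma>) B"
  have "bij_betw (merge_partitions n comb) ?T (pi_partitions n \<sigma> C)"
  proof (rule bij_betw_byWitness[where f' = "split_partition n A B comb"])
    show "\<forall>x\<in>?T. split_partition n A B comb (merge_partitions n comb x) = x"
      using split_merge_partitions[OF enc] by (auto simp: pi_partitions_def)
    show "merge_partitions n comb ` ?T \<subseteq> pi_partitions n \<sigma> C"
      using merge_partitions_in[OF enc \<sigma>] by auto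
    show "\<forall>h\<in>pi_partitions n \<sigma> C. merge_partitions n comb (split_partition n A B comb h) = h"
      by (metis split_partitionE[OF enc \<sigma>])
    show "split_partition n A B comb ` pi_partitions n \<sigma> C \<subseteq> ?T"
      by (auto elim!: split_partitionE[OF enc \<sigma>])
  qed
  then have "card (pi_partitions n \<sigma> C) = card ?T"
    by (simp add: bij_betw_same_card)
  also have "\<dots> = (\<Sum>\<pi> | \<pi> permutes {1..n}.
      card (pi_partitions n \<pi> A) * card (pi_partitions n (inv \<pi> \<circ> \<sigma>) B))"
    using enc by (subst card_SigmaI)
      (simp_all add: twisted_lex_encoding_def finite_permutations finite_pi_partitions card_cartesian_product)
  finally show ?thesis .
qed

lemma gmult_eq_sum:
  "gmult n a b \<sigma> =
    (if \<sigma> permutes {1..n} then \<Sum>\<pi> | \<pi> permutes {1..n}. a \<pi> * b (inv \<pi> \<circ> \<sigma>) else 0)"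
proof (cases "\<sigma> permutes {1..n}")
  case True
  have "(\<Sum>\<tau> | \<tau> permutes {1..n}. if \<pi> \<circ> \<tau> = \<sigma> then a \<pi> * b \<tau> else 0) = a \<pi> * b (inv \<pi> \<circ> \<sigma>)"
    if p: "\<pi> permutes {1..n}" for \<pi>
  proof -
    have "\<pi> \<circ> \<tau> = \<sigma> \<longleftrightarrow> \<tau> = inv \<pi> \<circ> \<sigma>" for \<tau>
      using permutes_inv_o[OF p] by (auto simp: o_assoc)
    then show ?thesis
      using permutes_compose[OF True permutes_inv[OF p]] by (simp add: finite_permutations sum.delta')
  qed
  with True show ?thesis
    by (simp add: gmult_def)
next
  case False
  then have "\<pi> \<circ> \<tau> \<noteq> \<sigma>" if "\<pi> permutes {1..n}" "\<tau> permutes {1..n}" for \<pi> \<tau>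
    using permutes_compose[OF that(2,1)] by auto
  with False show ?thesis
    by (simp add: gmult_def)
qed

definition partition_distribution :: "nat \<Rightarrow> int set \<Rightarrow> (nat \<Rightarrow> nat) \<Rightarrow> rat" where
  "partition_distribution n X \<pi> =
     (if \<pi> permutes {1..n} then of_nat (card (pi_partitions n \<pi> X)) / of_nat (card X ^ n) else 0)"

lemma gmult_partition_distribution:
  assumes enc: "twisted_lex_encoding A B C comb"
  shows "gmult n (partition_distribution n A) (partition_distribution n B) = partition_distribution n C"
proof
  fix \<sigma>
  show "gmult n (partition_distribution n A) (partition_distribution n B) \<sigma> = partition_distribution n C \<sigma>"
  proof (cases "\<sigma> permutes {1..n}")
    case True
    have "card (B \<times> A) = card C"
      using enc unfolding twisted_lex_encoding_def by (metis bij_betw_same_card)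
    then have "card C = card A * card B"
      by (simp add: card_cartesian_product mult.commute)
    then have "gmult n (partition_distribution n A) (partition_distribution n B) \<sigma> =
        of_nat (\<Sum>\<pi> | \<pi> permutes {1..n}.
          card (pi_partitions n \<pi> A) * card (pi_partitions n (inv \<pi> \<circ> \<sigma>) B)) / of_nat (card C ^ n)"
      using True permutes_compose[OF True permutes_inv]
      by (simp add: gmult_eq_sum partition_distribution_def sum_divide_distrib power_mult_distrib)
    then show ?thesis
      using True by (simp add: card_pi_partitions_merge[OF enc True] partition_distribution_def)
  next
    case False
    then show ?thesis
      by (simp add: gmult_eq_sum partition_distribution_def)
  qed
qed

section \<open>The three shelf modes\<close>

lemma mixed_radix_less_iff:
  fixes s s' t t' w :: int
  assumes "0 \<le> t" "t < w" "0 \<le> t'" "t' < w"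
  shows "s * w + t < s' * w + t' \<longleftrightarrow> s < s' \<or> (s = s' \<and> t < t')"
proof (cases s s' rule: linorder_cases)
  case less
  then have "(s + 1) * w \<le> s' * w"
    using assms by (intro mult_right_mono) auto
  with assms less show ?thesis
    by (simp add: algebra_simps)
next
  case greater
  then have "(s' + 1) * w \<le> s * w"
    using assms by (intro mult_right_mono) auto
  with assms greater show ?thesis
    by (simp add: algebra_simps)
qed simp

definition zrank_segment :: "int \<Rightarrow> int \<Rightarrow> int set" where
  "zrank_segment lo w = {a. lo \<le> zrank a \<and> zrank a < lo + w}"

lemma bij_betw_zrank_segment:
  assumes "0 \<le> lo"
  shows "bij_betw zrank (zrank_segment lo w) {lo..<lo + w}"
proof (rule bij_betw_imageI)
  show "inj_on zrank (zrank_segment lo w)"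
    by (simp add: inj_on_def)
  have "t \<in> zrank ` zrank_segment lo w" if "t \<in> {lo..<lo + w}" for t
    using that assms zrank_zunrank[of t] by (intro image_eqI[of _ _ "zunrank t"]) (auto simp: zrank_segment_def)
  then show "zrank ` zrank_segment lo w = {lo..<lo + w}"
    by (auto simp: zrank_segment_def)
qed

definition segment_digit :: "int \<Rightarrow> int \<Rightarrow> int \<Rightarrow> int \<Rightarrow> int" where
  "segment_digit lo w c a = (if 0 \<le> c then zrank a - lo else lo + w - 1 - zrank a)"

definition segment_comb :: "int \<Rightarrow> int \<Rightarrow> int \<Rightarrow> int \<Rightarrow> int" where
  "segment_comb lo w c a = zunrank (lo + (zrank c - lo) * w + segment_digit lo w c a)"

lemma segment_digit_bounds:
  "a \<in> zrank_segment lo w \<Longrightarrow> 0 \<le> segment_digit lo w c a \<and> segment_digit lo w c a < w"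
  by (auto simp: segment_digit_def zrank_segment_def)

lemma zrank_segment_comb:
  assumes "0 \<le> lo" "0 \<le> w" "lo \<le> zrank c" "a \<in> zrank_segment lo w"
  shows "zrank (segment_comb lo w c a) = lo + ((zrank c - lo) * w + segment_digit lo w c a)"
  using assms segment_digit_bounds[OF assms(4), of c]
  by (simp add: segment_comb_def zrank_zunrank add.assoc)

lemma segment_comb_nonneg_iff:
  assumes "0 \<le> lo" "0 \<le> w" "even (lo * w)" "lo \<le> zrank c" "a \<in> zrank_segment lo w"
  shows "0 \<le> segment_comb lo w c a \<longleftrightarrow> (0 \<le> c \<longleftrightarrow> 0 \<le> a)"
proof (cases "0 \<le> c")
  case True
  then have "zrank (segment_comb lo w c a) = zrank c * w - lo * w + zrank a"
    using zrank_segment_comb[OF assms(1,2,4,5)] by (simp add: segment_digit_def algebra_simps)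
  moreover have "even (zrank c)"
    using True by (simp add: even_zrank_iff)
  ultimately show ?thesis
    using assms(3) True by (simp flip: even_zrank_iff)
next
  case False
  then have "zrank (segment_comb lo w c a) = (zrank c + 1) * w - lo * w + 2 * lo - 1 - zrank a"
    using zrank_segment_comb[OF assms(1,2,4,5)] by (simp add: segment_digit_def algebra_simps)
  moreover have "odd (zrank c)"
    using False by (simp add: even_zrank_iff)
  ultimately show ?thesis
    using assms(3) False by (simp flip: even_zrank_iff)
qed

lemma twisted_lex_encoding_zrank_segment:
  assumes lo: "0 \<le> lo" and v: "0 \<le> v" and w: "0 \<le> w" and parity: "even (lo * w)"
  shows "twisted_lex_encoding (zrank_segment lo w) (zrank_segment lo v) (zrank_segment lo (v * w))
    (segment_comb lo w)"
proof (rule twisted_lex_encodingI)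
  note digit = segment_digit_bounds
  have c: "lo \<le> zrank c" "zrank c - lo < v" if "c \<in> zrank_segment lo v" for c
    using that by (auto simp: zrank_segment_def)
  note zr = zrank_segment_comb[OF lo w c(1)]
  show "finite (zrank_segment lo w)" "finite (zrank_segment lo v)" "finite (zrank_segment lo (v * w))"
    using bij_betw_finite[OF bij_betw_zrank_segment[OF lo]] by simp_all
  show "card (zrank_segment lo (v * w)) = card (zrank_segment lo w) * card (zrank_segment lo v)"
    using bij_betw_same_card[OF bij_betw_zrank_segment[OF lo]] v w by (simp add: nat_mult_distrib)
  show "segment_comb lo w c a \<in> zrank_segment lo (v * w)"
    if "c \<in> zrank_segment lo v" "a \<in> zrank_segment lo w" for c a
  proof -
    have "0 \<le> (zrank c - lo) * w" "(zrank c - lo) * w \<le> (v - 1) * w"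
      using c[OF that(1)] w by (auto intro: mult_right_mono)
    moreover have "(v - 1) * w + w = v * w"
      by (simp add: algebra_simps)
    ultimately have "lo \<le> zrank (segment_comb lo w c a) \<and> zrank (segment_comb lo w c a) < lo + v * w"
      using zr[OF that] digit[OF that(2), of c] by linarith
    then show ?thesis
      by (simp add: zrank_segment_def)
  qed
  show "0 \<le> segment_comb lo w c a \<longleftrightarrow> (0 \<le> c \<longleftrightarrow> 0 \<le> a)"
    if "c \<in> zrank_segment lo v" "a \<in> zrank_segment lo w" for c a
    using segment_comb_nonneg_iff[OF lo w parity c(1)[OF that(1)] that(2)] .
  show "zless (segment_comb lo w c a) (segment_comb lo w c' a') \<longleftrightarrow>
      zless c c' \<or> (c = c' \<and> (if 0 \<le> c then zless a a' else zless a' a))"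
    if "c \<in> zrank_segment lo v" "c' \<in> zrank_segment lo v"
      "a \<in> zrank_segment lo w" "a' \<in> zrank_segment lo w" for c c' a a'
  proof -
    have "zless (segment_comb lo w c a) (segment_comb lo w c' a') \<longleftrightarrow>
        zrank c - lo < zrank c' - lo \<or>
        (zrank c - lo = zrank c' - lo \<and> segment_digit lo w c a < segment_digit lo w c' a')"
      unfolding zless_def zr[OF that(1,3)] zr[OF that(2,4)]
      using mixed_radix_less_iff digit[OF that(3), of c] digit[OF that(4), of c'] by simp
    then show ?thesis
      by (auto simp: zless_def segment_digit_def)
  qed
qed

definition positive_comb :: "int \<Rightarrow> int \<Rightarrow> int \<Rightarrow> int" where
  "positive_comb k c a = (c - 1) * k + a"

lemma twisted_lex_encoding_positive:
  "twisted_lex_encoding {1..int k} {1..int l} {1..int (k * l)} (positive_comb (int k))"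
proof (rule twisted_lex_encodingI)
  have bounds: "0 \<le> (c - 1) * int k" "(c - 1) * int k \<le> (int l - 1) * int k"
    if "c \<in> {1..int l}" for c
    using that by (auto intro: mult_right_mono)
  show "card {1..int (k * l)} = card {1..int k} * card {1..int l}"
    by (simp add: nat_mult_distrib)
  show "positive_comb (int k) c a \<in> {1..int (k * l)}" if "c \<in> {1..int l}" "a \<in> {1..int k}" for c a
  proof -
    have "(int l - 1) * int k + int k = int (k * l)"
      by (simp add: algebra_simps)
    then have "1 \<le> positive_comb (int k) c a \<and> positive_comb (int k) c a \<le> int (k * l)"
      using bounds[OF that(1)] that(2) unfolding positive_comb_def atLeastAtMost_iff by linarith
    then show ?thesis
      by simp
  qed
  then show "0 \<le> positive_comb (int k) c a \<longleftrightarrow> (0 \<le> c \<longleftrightarrow> 0 \<le> a)"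
    if "c \<in> {1..int l}" "a \<in> {1..int k}" for c a
    using that by fastforce
  show "zless (positive_comb (int k) c a) (positive_comb (int k) c' a') \<longleftrightarrow>
      zless c c' \<or> (c = c' \<and> (if 0 \<le> c then zless a a' else zless a' a))"
    if "c \<in> {1..int l}" "c' \<in> {1..int l}" "a \<in> {1..int k}" "a' \<in> {1..int k}" for c c' a a'
  proof -
    have "zless (positive_comb (int k) c a) (positive_comb (int k) c' a') \<longleftrightarrow>
        (c - 1) * int k + (a - 1) < (c' - 1) * int k + (a' - 1)"
      using bounds[OF that(1)] bounds[OF that(2)] that(3,4)
      by (subst zless_nonneg_iff) (auto simp: positive_comb_def)
    also have "\<dots> \<longleftrightarrow> c - 1 < c' - 1 \<or> (c - 1 = c' - 1 \<and> a - 1 < a' - 1)"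
      using that(3,4) by (intro mixed_radix_less_iff) auto
    finally show ?thesis
      using that by (auto simp: zless_nonneg_iff)
  qed
qed simp_all

lemma sym_interval_eq_zrank_segment: "{- int m..int m} = zrank_segment 0 (2 * int m + 1)"
  by (auto simp: zrank_segment_def zrank_def)

lemma punctured_interval_eq_zrank_segment: "{- int m..int m} - {0} = zrank_segment 1 (2 * int m)"
  by (auto simp: zrank_segment_def zrank_def)

lemma twisted_lex_encoding_lazy:
  "\<exists>comb. twisted_lex_encoding {- int k..int k} {- int l..int l}
     {- int (2 * k * l + k + l)..int (2 * k * l + k + l)} comb"
proof -
  have "2 * int (2 * k * l + k + l) + 1 = (2 * int l + 1) * (2 * int k + 1)"
    by (simp add: algebra_simps)
  then show ?thesis
    using twisted_lex_encoding_zrank_segment[of 0 "2 * int l + 1" "2 * int k + 1"]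
    by (simp only: sym_interval_eq_zrank_segment) auto
qed

lemma twisted_lex_encoding_standard:
  "\<exists>comb. twisted_lex_encoding ({- int k..int k} - {0}) ({- int l..int l} - {0})
     ({- int (2 * k * l)..int (2 * k * l)} - {0}) comb"
proof -
  have "2 * int (2 * k * l) = 2 * int l * (2 * int k)"
    by (simp add: algebra_simps)
  then show ?thesis
    using twisted_lex_encoding_zrank_segment[of 1 "2 * int l" "2 * int k"]
    by (simp only: punctured_interval_eq_zrank_segment) auto
qed

lemma phi_eq_partition_distribution: "phi n m = partition_distribution n {- int m..int m}"
proof -
  have "card {- int m..int m} = 2 * m + 1"
    by simp
  then show ?thesis
    by (auto simp: phi_def Omega_def partition_distribution_def pi_partitions_def)
qed

lemma phi_star_eq_partition_distribution:
  "phi_star n m = partition_distribution n ({- int m..int m} - {0})"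
proof -
  have "card ({- int m..int m} - {0}) = 2 * m"
    by (simp add: card_Diff_singleton)
  then show ?thesis
    by (auto simp: phi_star_def Omega_star_def partition_distribution_def pi_partitions_def)
qed

lemma phi_plus_eq_partition_distribution: "phi_plus n m = partition_distribution n {1..int m}"
  by (auto simp: phi_plus_def Omega_plus_def partition_distribution_def pi_partitions_def)

theorem corollary3p7:
  fixes n :: nat
  assumes "n \<ge> 1"
  shows "(\<forall>k l :: nat. gmult n (phi n k) (phi n l) = phi n (2*k*l + k + l))
       \<and> (\<forall>k l :: nat. k \<ge> 1 \<longrightarrow> l \<ge> 1 \<longrightarrow> gmult n (phi_star n k) (phi_star n l) = phi_star n (2*k*l))
       \<and> (\<forall>k l :: nat. k \<ge> 1 \<longrightarrow> l \<ge> 1 \<longrightarrow> gmult n (phi_plus n k) (phi_plus n l) = phi_plus n (k*l))"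
proof (intro conjI allI impI)
  fix k l :: nat
  show "gmult n (phi n k) (phi n l) = phi n (2*k*l + k + l)"
    using twisted_lex_encoding_lazy[of k l]
    by (auto simp: phi_eq_partition_distribution gmult_partition_distribution)
  show "gmult n (phi_star n k) (phi_star n l) = phi_star n (2*k*l)"
    using twisted_lex_encoding_standard[of k l]
    by (auto simp: phi_star_eq_partition_distribution gmult_partition_distribution)
  show "gmult n (phi_plus n k) (phi_plus n l) = phi_plus n (k*l)"
    using twisted_lex_encoding_positive[of k l]
    by (auto simp: phi_plus_eq_partition_distribution gmult_partition_distribution)
qed

end
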